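(* Let $\alpha,\beta>0$ and let $\lambda\in\mathbb{R}$, $a,b>0$ with $-b<\frac{\lambda}{2}<b$. Let $X,Y$ be independent random variables with $X\sim \mathrm{K}(\lambda,a,b;\alpha,1)$ and $Y\sim\mathrm{K}(-\lambda,a,b;\beta,1)$, and set $(U,V)=H_{II}^{+,\alpha,\beta}(X,Y)$. Then $U$ and $V$ are independent, with $U\sim\mathrm{K}(-\lambda,a,b;\alpha,1)$ and $V\sim \mathrm{K}(\lambda,a,b;\beta,1)$.
   Context: $\mathbb{R}_+=(0,\infty)$. For $\alpha,\beta>0$ the map $H_{II}^{+,\alpha,\beta}:\mathbb{R}_+^2\to\mathbb{R}_+^2$ is $$H_{II}^{+,\alpha,\beta}(x,y)=\left(\frac{y}{\alpha}\,\frac{\beta+\alpha x+\beta y}{1+x+y},\ \frac{x}{\beta}\,\frac{\alpha+\alpha x+\beta y}{1+x+y}\right).$$ For $p,q>0$, $a>0$ and $\lambda,b\in\mathbb{R}$ with $-b<\frac{\lambda}{2}$, the Kummer distribution of type 2 $\mathrm{K}(\lambda,a,b;p,q)$ is the probability distribution on $\mathbb{R}_+$ with density proportional to $x^{\lambda-1}e^{-apx}(1+qx^{-1})^{-b+\frac{\lambda}{2}}$, $x\in\mathbb{R}_+$. *)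

theory Defs
  imports "HOL-Probability.Probability"
begin

definition H_II_plus :: "real \<Rightarrow> real \<Rightarrow> real \<times> real \<Rightarrow> real \<times> real" where
  "H_II_plus \<alpha> \<beta> = (\<lambda>(x, y).
     ((y / \<alpha>) * ((\<beta> + \<alpha> * x + \<beta> * y) / (1 + x + y)),
      (x / \<beta>) * ((\<alpha> + \<alpha> * x + \<beta> * y) / (1 + x + y))))"

definition kummer2_dens :: "real \<Rightarrow> real \<Rightarrow> real \<Rightarrow> real \<Rightarrow> real \<Rightarrow> real \<Rightarrow> real" where
  "kummer2_dens lam a b p q x =
     (if 0 < x then x powr (lam - 1) * exp (- a * p * x) * (1 + q / x) powr (- b + lam / 2)
      else 0)"

definition kummer2 :: "real \<Rightarrow> real \<Rightarrow> real \<Rightarrow> real \<Rightarrow> real \<Rightarrow> real measure" where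
  "kummer2 lam a b p q =
     density lborel (\<lambda>x. ennreal (kummer2_dens lam a b p q x /
                                   (\<integral>t. kummer2_dens lam a b p q t \<partial>lborel)))"

end

theory Submission
  imports Defs
begin

text \<open>The map \<open>H_II_plus \<alpha> \<beta>\<close> preserves every line \<open>\<alpha>x + \<beta>y = s\<close> and acts on it by a
  decreasing M\<o>bius map. Along these lines the product density of \<open>(X, Y)\<close> is carried to
  \<open>(\<beta>/\<alpha>)\<^sup>\<lambda>\<close> times the product of the target densities times the Jacobian, so integrating
  line by line (Fubini and a one-dimensional substitution) shows that \<open>(U, V)\<close> has a density
  proportional to \<open>f\<^sub>U(u) f\<^sub>V(v)\<close>. A probability measure with a product density is the product
  of its normalised marginals, which gives independence and the two laws.\<close>

lemma (in prob_space) distr_pair_snd: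
  assumes "sigma_finite_measure N"
  shows "distr (M \<Otimes>\<^sub>M N) N snd = N"
proof (intro measure_eqI)
  interpret N: sigma_finite_measure N by fact
  fix A assume A: "A \<in> sets (distr (M \<Otimes>\<^sub>M N) N snd)"
  then have "emeasure (distr (M \<Otimes>\<^sub>M N) N snd) A = emeasure (M \<Otimes>\<^sub>M N) (space M \<times> A)"
    by (auto simp: emeasure_distr space_pair_measure dest: sets.sets_into_space
             intro!: arg_cong2[where f = emeasure])
  with A show "emeasure (distr (M \<Otimes>\<^sub>M N) N snd) A = emeasure N A"
    by (simp add: N.emeasure_pair_measure_Times emeasure_space_1)
qed simp

lemma (in prob_space) distr_pair_eq_pair_measure_if_indep_var:
  fixes X Y :: "'a \<Rightarrow> real"
  assumes "indep_var borel X borel Y"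
  shows "distr M (lborel \<Otimes>\<^sub>M lborel) (\<lambda>\<omega>. (X \<omega>, Y \<omega>)) = distr M lborel X \<Otimes>\<^sub>M distr M lborel Y"
proof -
  have [measurable]: "X \<in> borel_measurable M" "Y \<in> borel_measurable M"
    and "distr M borel X \<Otimes>\<^sub>M distr M borel Y = distr M (borel \<Otimes>\<^sub>M borel) (\<lambda>\<omega>. (X \<omega>, Y \<omega>))"
    using assms indep_var_distribution_eq by blast+
  moreover have "distr M borel X = distr M lborel X" "distr M borel Y = distr M lborel Y"
    by (simp_all cong: distr_cong)
  moreover have "distr M (borel \<Otimes>\<^sub>M borel) (\<lambda>\<omega>. (X \<omega>, Y \<omega>)) = distr M (lborel \<Otimes>\<^sub>M lborel) (\<lambda>\<omega>. (X \<omega>, Y \<omega>))"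
    by (rule distr_cong) (simp_all cong: sets_pair_measure_cong)
  ultimately show ?thesis by simp
qed

lemma (in prob_space) indep_var_if_distr_eq_pair_measure:
  fixes Z :: "'a \<Rightarrow> real \<times> real"
  assumes [measurable]: "Z \<in> M \<rightarrow>\<^sub>M lborel \<Otimes>\<^sub>M lborel"
    and N1: "prob_space N1" "sets N1 = sets lborel" and N2: "prob_space N2" "sets N2 = sets lborel"
    and law: "distr M (lborel \<Otimes>\<^sub>M lborel) Z = N1 \<Otimes>\<^sub>M N2"
  shows "indep_var borel (\<lambda>\<omega>. fst (Z \<omega>)) borel (\<lambda>\<omega>. snd (Z \<omega>))"
    and "distr M lborel (\<lambda>\<omega>. fst (Z \<omega>)) = N1"
    and "distr M lborel (\<lambda>\<omega>. snd (Z \<omega>)) = N2"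
proof -
  have Z_fst: "(\<lambda>\<omega>. fst (Z \<omega>)) \<in> borel_measurable M" and Z_snd: "(\<lambda>\<omega>. snd (Z \<omega>)) \<in> borel_measurable M"
    using measurable_compose[OF assms(1) measurable_fst] measurable_compose[OF assms(1) measurable_snd]
    by (simp_all add: comp_def)
  show fst_law: "distr M lborel (\<lambda>\<omega>. fst (Z \<omega>)) = N1"
  proof -
    have "distr M lborel (\<lambda>\<omega>. fst (Z \<omega>)) = distr (N1 \<Otimes>\<^sub>M N2) lborel fst"
      unfolding law[symmetric] by (subst distr_distr) (simp_all add: comp_def)
    also have "\<dots> = distr (N1 \<Otimes>\<^sub>M N2) N1 fst"
      by (rule distr_cong) (simp_all add: N1)
    also have "\<dots> = N1"
      by (rule prob_space.distr_pair_fst[OF N2(1)])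
    finally show ?thesis .
  qed
  show snd_law: "distr M lborel (\<lambda>\<omega>. snd (Z \<omega>)) = N2"
  proof -
    have "distr M lborel (\<lambda>\<omega>. snd (Z \<omega>)) = distr (N1 \<Otimes>\<^sub>M N2) lborel snd"
      unfolding law[symmetric] by (subst distr_distr) (simp_all add: comp_def)
    also have "\<dots> = distr (N1 \<Otimes>\<^sub>M N2) N2 snd"
      by (rule distr_cong) (simp_all add: N2)
    also have "\<dots> = N2"
      by (rule prob_space.distr_pair_snd[OF N1(1) prob_space_imp_sigma_finite[OF N2(1)]])
    finally show ?thesis .
  qed
  have "distr M borel (\<lambda>\<omega>. fst (Z \<omega>)) \<Otimes>\<^sub>M distr M borel (\<lambda>\<omega>. snd (Z \<omega>))
      = distr M (borel \<Otimes>\<^sub>M borel) (\<lambda>\<omega>. (fst (Z \<omega>), snd (Z \<omega>)))"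
  proof -
    have "distr M (borel \<Otimes>\<^sub>M borel) (\<lambda>\<omega>. (fst (Z \<omega>), snd (Z \<omega>))) = distr M (lborel \<Otimes>\<^sub>M lborel) Z"
      by (rule distr_cong) (simp_all cong: sets_pair_measure_cong)
    moreover have "distr M borel (\<lambda>\<omega>. fst (Z \<omega>)) = distr M lborel (\<lambda>\<omega>. fst (Z \<omega>))"
      "distr M borel (\<lambda>\<omega>. snd (Z \<omega>)) = distr M lborel (\<lambda>\<omega>. snd (Z \<omega>))"
      by (simp_all cong: distr_cong)
    ultimately show ?thesis using fst_law snd_law law by simp
  qed
  then show "indep_var borel (\<lambda>\<omega>. fst (Z \<omega>)) borel (\<lambda>\<omega>. snd (Z \<omega>))"
    using Z_fst Z_snd by (subst indep_var_distribution_eq) simp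
qed

definition normalized_density :: "(real \<Rightarrow> real) \<Rightarrow> real measure" where
  "normalized_density f = density lborel (\<lambda>x. ennreal (f x / (\<integral>t. f t \<partial>lborel)))"

lemma sets_normalized_density [simp, measurable_cong]: "sets (normalized_density f) = sets borel"
  by (simp add: normalized_density_def)

lemma kummer2_eq_normalized_density: "kummer2 lam a b p q = normalized_density (kummer2_dens lam a b p q)"
  by (simp add: kummer2_def normalized_density_def)

lemma prob_space_normalized_density:
  assumes "integrable lborel f" "\<And>x. 0 \<le> f x" "0 < (\<integral>t. f t \<partial>lborel)"
  shows "prob_space (normalized_density f)"
proof (rule prob_spaceI)
  have [measurable]: "f \<in> borel_measurable borel"
    using borel_measurable_integrable[OF assms(1)] by simp
  let ?C = "\<integral>t. f t \<partial>lborel"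
  have "emeasure (normalized_density f) (space (normalized_density f))
      = (\<integral>\<^sup>+x. ennreal (1 / ?C) * ennreal (f x) \<partial>lborel)"
    unfolding normalized_density_def using assms(2,3)
    by (subst emeasure_density) (auto intro!: nn_integral_cong simp: ennreal_mult[symmetric])
  also have "\<dots> = ennreal (1 / ?C) * ennreal ?C"
    using assms by (subst nn_integral_cmult) (simp_all add: nn_integral_eq_integral)
  also have "\<dots> = 1" using assms(3) by (simp add: ennreal_mult[symmetric])
  finally show "emeasure (normalized_density f) (space (normalized_density f)) = 1" .
qed

lemma normalized_density_pair:
  assumes [measurable]: "f \<in> borel_measurable borel" "g \<in> borel_measurable borel"
    and f: "\<And>x. 0 \<le> f x" and g: "\<And>x. 0 \<le> g x"
  shows "normalized_density f \<Otimes>\<^sub>M normalized_density g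
       = density (lborel \<Otimes>\<^sub>M lborel)
           (\<lambda>z. ennreal (1 / ((\<integral>t. f t \<partial>lborel) * (\<integral>t. g t \<partial>lborel)) * f (fst z) * g (snd z)))"
proof -
  have "0 \<le> (\<integral>t. f t \<partial>lborel)" "0 \<le> (\<integral>t. g t \<partial>lborel)"
    using f g by (simp_all add: integral_nonneg_AE)
  have "normalized_density f \<Otimes>\<^sub>M normalized_density g
      = density (lborel \<Otimes>\<^sub>M lborel) (\<lambda>(x, y). ennreal (f x / (\<integral>t. f t \<partial>lborel)) * ennreal (g y / (\<integral>t. g t \<partial>lborel)))"
    unfolding normalized_density_def
    by (rule pair_measure_density) (simp_all add: sigma_finite_measure.sigma_finite_iff_density_finite[OF lborel.sigma_finite_measure_axioms]
          lborel.sigma_finite_measure_axioms)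
  also have "\<dots> = density (lborel \<Otimes>\<^sub>M lborel)
           (\<lambda>z. ennreal (1 / ((\<integral>t. f t \<partial>lborel) * (\<integral>t. g t \<partial>lborel)) * f (fst z) * g (snd z)))"
    using f g \<open>0 \<le> (\<integral>t. f t \<partial>lborel)\<close> \<open>0 \<le> (\<integral>t. g t \<partial>lborel)\<close>
    by (intro density_cong) (auto simp: ennreal_mult[symmetric] field_simps)
  finally show ?thesis .
qed

lemma integrable_if_nn_integral_finite:
  fixes f :: "real \<Rightarrow> real"
  assumes [measurable]: "f \<in> borel_measurable borel" and f: "\<And>x. 0 \<le> f x"
    and "(\<integral>\<^sup>+x. ennreal (f x) \<partial>lborel) \<noteq> 0" "(\<integral>\<^sup>+x. ennreal (f x) \<partial>lborel) \<noteq> \<top>"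
  shows "integrable lborel f" and "(\<integral>\<^sup>+x. ennreal (f x) \<partial>lborel) = ennreal (\<integral>t. f t \<partial>lborel)"
    and "0 < (\<integral>t. f t \<partial>lborel)"
proof -
  show "integrable lborel f"
    using assms by (intro integrableI_bounded) (simp_all add: less_top)
  then show eq: "(\<integral>\<^sup>+x. ennreal (f x) \<partial>lborel) = ennreal (\<integral>t. f t \<partial>lborel)"
    using f by (simp add: nn_integral_eq_integral)
  show "0 < (\<integral>t. f t \<partial>lborel)"
    using assms(3) f unfolding eq by (simp add: integral_nonneg_AE order_le_neq_trans)
qed

lemma normalized_density_pair_if_prob_space:
  assumes [measurable]: "f \<in> borel_measurable borel" "g \<in> borel_measurable borel"
    and f: "\<And>x. 0 \<le> f x" and g: "\<And>x. 0 \<le> g x" and k: "0 \<le> k"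
    and prob: "prob_space (density (lborel \<Otimes>\<^sub>M lborel) (\<lambda>z. ennreal (k * f (fst z) * g (snd z))))"
  shows "prob_space (normalized_density f)" and "prob_space (normalized_density g)"
    and "density (lborel \<Otimes>\<^sub>M lborel) (\<lambda>z. ennreal (k * f (fst z) * g (snd z)))
         = normalized_density f \<Otimes>\<^sub>M normalized_density g"
proof -
  define If Ig where "If = (\<integral>\<^sup>+x. ennreal (f x) \<partial>lborel)" and "Ig = (\<integral>\<^sup>+x. ennreal (g x) \<partial>lborel)"
  have "1 = emeasure (density (lborel \<Otimes>\<^sub>M lborel) (\<lambda>z. ennreal (k * f (fst z) * g (snd z))))
              (space (lborel \<Otimes>\<^sub>M lborel))"
    using prob_space.emeasure_space_1[OF prob] by simp
  also have "\<dots> = ennreal k * (\<integral>\<^sup>+z. ennreal (f (fst z)) * ennreal (g (snd z)) \<partial>(lborel \<Otimes>\<^sub>M lborel))"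
    using f g k by (subst emeasure_density[OF _ sets.top], simp, subst nn_integral_cmult[symmetric])
      (auto intro!: nn_integral_cong simp: ennreal_mult[symmetric] space_pair_measure mult.assoc)
  also have "\<dots> = ennreal k * (If * Ig)"
    by (simp add: lborel.nn_integral_fst[symmetric] nn_integral_cmult nn_integral_multc If_def Ig_def)
  finally have mass: "ennreal k * (If * Ig) = 1" ..
  then have nonzero: "ennreal k \<noteq> 0" "If \<noteq> 0" "Ig \<noteq> 0" by auto
  with mass have finite: "If \<noteq> \<top>" "Ig \<noteq> \<top>"
    by (auto simp: ennreal_top_mult ennreal_mult_top)
  note F = integrable_if_nn_integral_finite[of f, folded If_def, OF _ f nonzero(2) finite(1)]
   and G = integrable_if_nn_integral_finite[of g, folded Ig_def, OF _ g nonzero(3) finite(2)]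
  show "prob_space (normalized_density f)" "prob_space (normalized_density g)"
    using prob_space_normalized_density F G f g by auto
  have "ennreal (k * ((\<integral>t. f t \<partial>lborel) * (\<integral>t. g t \<partial>lborel))) = 1"
    using mass k F(3) G(3) by (simp add: F(2) G(2) ennreal_mult)
  then have "k * ((\<integral>t. f t \<partial>lborel) * (\<integral>t. g t \<partial>lborel)) = 1"
    by simp
  then have "k = 1 / ((\<integral>t. f t \<partial>lborel) * (\<integral>t. g t \<partial>lborel))"
    using F(3) G(3) by (simp add: field_simps)
  then show "density (lborel \<Otimes>\<^sub>M lborel) (\<lambda>z. ennreal (k * f (fst z) * g (snd z)))
         = normalized_density f \<Otimes>\<^sub>M normalized_density g"
    by (simp add: normalized_density_pair f g)
qed

lemma kummer2_dens_nonneg: "0 \<le> kummer2_dens lam a b p q x"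
  by (simp add: kummer2_dens_def)

lemma kummer2_dens_eq_0: "x \<le> 0 \<Longrightarrow> kummer2_dens lam a b p q x = 0"
  by (simp add: kummer2_dens_def)

lemma kummer2_dens_pos:
  assumes "0 < x" "0 \<le> q"
  shows "0 < kummer2_dens lam a b p q x"
proof -
  have "0 < 1 + q / x" using assms by (simp add: add_pos_nonneg)
  then show ?thesis using assms by (simp add: kummer2_dens_def)
qed

lemma ln_kummer2_dens:
  assumes "0 < x"
  shows "ln (kummer2_dens lam a b p 1 x) = (lam - 1) * ln x - a * p * x + (lam / 2 - b) * (ln (1 + x) - ln x)"
proof -
  have "1 + 1 / x = (1 + x) / x" using assms by (simp add: field_simps)
  moreover have "0 < 1 + 1 / x" using assms by (simp add: add_pos_pos)
  ultimately show ?thesis using assms by (simp add: kummer2_dens_def ln_mult ln_div)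
qed

lemma borel_measurable_kummer2_dens [measurable]: "kummer2_dens lam a b p q \<in> borel_measurable borel"
  unfolding kummer2_dens_def by measurable

lemma kummer2_dens_mult_line_eq_0:
  fixes \<alpha> \<beta> s x :: real
  assumes "0 < \<alpha>" "0 < \<beta>" and "\<not> (0 < x \<and> x < s / \<alpha>)"
  shows "kummer2_dens l a b p q x * kummer2_dens l' a' b' p' q' ((s - \<alpha> * x) / \<beta>) = 0"
proof (cases "x \<le> 0")
  case False
  with assms have "(s - \<alpha> * x) / \<beta> \<le> 0"
    by (simp add: field_simps divide_nonpos_pos)
  then show ?thesis by (simp add: kummer2_dens_eq_0)
qed (simp add: kummer2_dens_eq_0)

lemma H_II_plus_factors:
  assumes "0 < \<alpha>" "0 < \<beta>" "0 < 1 + x + y" and "H_II_plus \<alpha> \<beta> (x, y) = (u, v)"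
  defines "t \<equiv> \<alpha> * x + \<beta> * y" and "S \<equiv> 1 + x + y"
  shows "u = y * (\<beta> + t) / (\<alpha> * S)" and "v = x * (\<alpha> + t) / (\<beta> * S)"
    and "1 + u = (1 + y) * (\<alpha> + t) / (\<alpha> * S)" and "1 + v = (1 + x) * (\<beta> + t) / (\<beta> * S)"
proof -
  show u: "u = y * (\<beta> + t) / (\<alpha> * S)" and v: "v = x * (\<alpha> + t) / (\<beta> * S)"
    using assms(4) by (auto simp: H_II_plus_def t_def S_def times_divide_times_eq add.assoc)
  have "(1 + y) * (\<alpha> + t) = \<alpha> * S + y * (\<beta> + t)" "(1 + x) * (\<beta> + t) = \<beta> * S + x * (\<alpha> + t)"
    by (simp_all add: t_def S_def algebra_simps)
  moreover have "S \<noteq> 0" using assms(3) by (simp add: S_def)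
  ultimately show "1 + u = (1 + y) * (\<alpha> + t) / (\<alpha> * S)" "1 + v = (1 + x) * (\<beta> + t) / (\<beta> * S)"
    using assms(1,2) by (simp_all add: u v field_simps)
qed

lemma H_II_plus_preserves_line:
  assumes "0 < \<alpha>" "0 < \<beta>" "0 < 1 + x + y" and "H_II_plus \<alpha> \<beta> (x, y) = (u, v)"
  shows "\<alpha> * u + \<beta> * v = \<alpha> * x + \<beta> * y"
proof -
  define t S where "t = \<alpha> * x + \<beta> * y" and "S = 1 + x + y"
  have "S \<noteq> 0" using assms(3) by (simp add: S_def)
  have "\<alpha> * u + \<beta> * v = (y * (\<beta> + t) + x * (\<alpha> + t)) / S"
    using H_II_plus_factors(1,2)[OF assms, folded t_def S_def] assms(1,2) \<open>S \<noteq> 0\<close>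
    by (simp add: field_simps)
  also have "y * (\<beta> + t) + x * (\<alpha> + t) = t * S"
    by (simp add: t_def S_def algebra_simps)
  finally show ?thesis using \<open>S \<noteq> 0\<close> by (simp add: t_def)
qed

text \<open>Proved through logarithms: with \<open>t = \<alpha>x + \<beta>y\<close> and \<open>S = 1 + x + y\<close>,
  each of \<open>u, 1 + u, v, 1 + v, J\<close> is a product of powers of \<open>x, 1 + x, y, 1 + y, \<alpha> + t,
  \<beta> + t, S\<close> and constants, and \<open>\<alpha>u + \<beta>v = t\<close> matches the exponential factors.
  \<open>J\<close> is the absolute Jacobian determinant of \<open>H_II_plus \<alpha> \<beta>\<close>.\<close>
lemma kummer2_dens_mult_H_II_plus:
  fixes x y \<alpha> \<beta> lam a b :: real
  assumes x: "0 < x" and y: "0 < y" and al: "0 < \<alpha>" and be: "0 < \<beta>"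
    and uv: "H_II_plus \<alpha> \<beta> (x, y) = (u, v)"
  defines "t \<equiv> \<alpha> * x + \<beta> * y" and "S \<equiv> 1 + x + y"
  defines "J \<equiv> (\<alpha> + t) * (\<beta> + t) / (\<alpha> * \<beta> * S\<^sup>2)"
  shows "kummer2_dens lam a b \<alpha> 1 x * kummer2_dens (- lam) a b \<beta> 1 y =
         (\<beta> / \<alpha>) powr lam * kummer2_dens (- lam) a b \<alpha> 1 u * kummer2_dens lam a b \<beta> 1 v * J"
proof -
  have t: "0 < t" and S: "0 < S" using x y al be by (auto simp: t_def S_def intro!: add_pos_pos)
  note factors = H_II_plus_factors[OF al be _ uv, folded t_def S_def, OF S]
  have u: "0 < u" and v: "0 < v" and J: "0 < J"
    using x y al be t S by (auto simp: factors(1,2) J_def)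
  have line: "\<alpha> * u + \<beta> * v = \<alpha> * x + \<beta> * y"
    using H_II_plus_preserves_line[OF al be _ uv] S by (simp add: S_def)
  have ln_1u: "ln (1 + u) = ln (1 + y) + ln (\<alpha> + t) - ln \<alpha> - ln S"
    using y t S al by (simp add: factors(3) ln_div ln_mult)
  have ln_1v: "ln (1 + v) = ln (1 + x) + ln (\<beta> + t) - ln \<beta> - ln S"
    using x t S be by (simp add: factors(4) ln_div ln_mult)
  have ln_u: "ln u = ln y + ln (\<beta> + t) - ln \<alpha> - ln S"
    using y t S al be by (simp add: factors(1) ln_div ln_mult)
  have ln_v: "ln v = ln x + ln (\<alpha> + t) - ln \<beta> - ln S"
    using x t S al be by (simp add: factors(2) ln_div ln_mult)
  have ln_J: "ln J = ln (\<alpha> + t) + ln (\<beta> + t) - ln \<alpha> - ln \<beta> - 2 * ln S"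
    using t S al be by (simp add: J_def ln_div ln_mult ln_realpow)
  have nonzero: "kummer2_dens lam a b \<alpha> 1 x \<noteq> 0" "kummer2_dens (- lam) a b \<beta> 1 y \<noteq> 0"
      "kummer2_dens (- lam) a b \<alpha> 1 u \<noteq> 0" "kummer2_dens lam a b \<beta> 1 v \<noteq> 0"
    using kummer2_dens_pos[OF x] kummer2_dens_pos[OF y] kummer2_dens_pos[OF u] kummer2_dens_pos[OF v]
    by (metis less_irrefl zero_le_one)+
  have "ln (kummer2_dens lam a b \<alpha> 1 x * kummer2_dens (- lam) a b \<beta> 1 y) =
        (lam - 1) * ln x - a * \<alpha> * x + (- b + lam / 2) * (ln (1 + x) - ln x)
      + (- lam - 1) * ln y - a * \<beta> * y + (- b - lam / 2) * (ln (1 + y) - ln y)"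
    using x y nonzero by (simp add: ln_mult ln_kummer2_dens)
  also have "\<dots> = lam * (ln \<beta> - ln \<alpha>)
      + ((- lam - 1) * ln u - a * \<alpha> * u + (- b - lam / 2) * (ln (1 + u) - ln u))
      + ((lam - 1) * ln v - a * \<beta> * v + (- b + lam / 2) * (ln (1 + v) - ln v)) + ln J"
  proof -
    have "a * \<alpha> * u + a * \<beta> * v = a * \<alpha> * x + a * \<beta> * y"
      using line by (metis distrib_left mult.assoc)
    then show ?thesis unfolding ln_u ln_v ln_1u ln_1v ln_J by (simp add: algebra_simps)
  qed
  also have "\<dots> = ln ((\<beta> / \<alpha>) powr lam * kummer2_dens (- lam) a b \<alpha> 1 u * kummer2_dens lam a b \<beta> 1 v * J)"
    using u v J al be nonzero by (simp add: ln_mult ln_kummer2_dens ln_div)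
  finally show ?thesis
    using x y u v J al be by (simp add: kummer2_dens_pos)
qed

text \<open>On each line \<open>\<alpha>x + \<beta>y = s\<close>, which \<open>H_II_plus \<alpha> \<beta>\<close> preserves, its first
  coordinate is the decreasing M\<o>bius map \<open>x \<mapsto> H_II_line_map \<alpha> \<beta> s x\<close>;
  \<open>H_II_line_jacobian\<close> is the absolute value of its derivative.\<close>
definition H_II_line_map :: "real \<Rightarrow> real \<Rightarrow> real \<Rightarrow> real \<Rightarrow> real" where
  "H_II_line_map \<alpha> \<beta> s x = (\<beta> + s) * (s - \<alpha> * x) / (\<alpha> * (\<beta> + s + (\<beta> - \<alpha>) * x))"

definition H_II_line_jacobian :: "real \<Rightarrow> real \<Rightarrow> real \<Rightarrow> real \<Rightarrow> real" where
  "H_II_line_jacobian \<alpha> \<beta> s x = \<beta> * (\<alpha> + s) * (\<beta> + s) / (\<alpha> * (\<beta> + s + (\<beta> - \<alpha>) * x)\<^sup>2)"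

lemma H_II_line_denominator_pos:
  fixes \<alpha> \<beta> s x :: real
  assumes "0 < \<alpha>" "0 < \<beta>" "0 < s" and x: "x \<in> {0..s / \<alpha>}"
  shows "0 < \<beta> + s + (\<beta> - \<alpha>) * x"
proof (cases "\<alpha> \<le> \<beta>")
  case False
  have "(\<alpha> - \<beta>) * x \<le> (\<alpha> - \<beta>) * (s / \<alpha>)"
    using x False by (intro mult_left_mono) auto
  also have "\<dots> < s + \<beta>"
    using assms False by (simp add: field_simps add_pos_pos)
  finally show ?thesis by (simp add: algebra_simps)
qed (use assms in \<open>simp add: add_pos_nonneg\<close>)

lemma has_real_derivative_H_II_line_map:
  assumes "0 < \<alpha>" and d: "\<beta> + s + (\<beta> - \<alpha>) * x \<noteq> 0"
  shows "((\<lambda>x. - H_II_line_map \<alpha> \<beta> s x) has_real_derivative H_II_line_jacobian \<alpha> \<beta> s x) (at x)"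
proof -
  define D where "D = \<beta> + s + (\<beta> - \<alpha>) * x"
  have "D \<noteq> 0" using d by (simp add: D_def)
  have "((\<lambda>x. - H_II_line_map \<alpha> \<beta> s x) has_real_derivative
     - (((\<beta> + s) * (- \<alpha>) * (\<alpha> * D) - (\<beta> + s) * (s - \<alpha> * x) * (\<alpha> * (\<beta> - \<alpha>))) / (\<alpha> * D)\<^sup>2)) (at x)"
    unfolding H_II_line_map_def D_def using assms
    by (auto intro!: derivative_eq_intros simp: power2_eq_square)
  also have "(\<beta> + s) * (- \<alpha>) * (\<alpha> * D) - (\<beta> + s) * (s - \<alpha> * x) * (\<alpha> * (\<beta> - \<alpha>))
      = - (\<alpha> * (\<beta> * (\<beta> + s) * (\<alpha> + s)))"
    by (simp add: D_def algebra_simps)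
  also have "- (- (\<alpha> * (\<beta> * (\<beta> + s) * (\<alpha> + s))) / (\<alpha> * D)\<^sup>2) = \<beta> * (\<alpha> + s) * (\<beta> + s) / (\<alpha> * D\<^sup>2)"
    using assms(1) \<open>D \<noteq> 0\<close> by (simp add: field_simps power2_eq_square)
  also have "\<dots> = H_II_line_jacobian \<alpha> \<beta> s x"
    by (simp add: H_II_line_jacobian_def D_def)
  finally show ?thesis .
qed

lemma H_II_plus_on_line:
  assumes al: "0 < \<alpha>" and be: "0 < \<beta>" and x: "0 < x" "x < s / \<alpha>"
  defines "y \<equiv> (s - \<alpha> * x) / \<beta>" and "u \<equiv> H_II_line_map \<alpha> \<beta> s x"
  shows "H_II_plus \<alpha> \<beta> (x, y) = (u, (s - \<alpha> * u) / \<beta>)"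
    and "(\<alpha> + s) * (\<beta> + s) / (\<alpha> * \<beta> * (1 + x + y)\<^sup>2) = H_II_line_jacobian \<alpha> \<beta> s x"
proof -
  have y: "0 < y" using al be x by (simp add: y_def field_simps)
  have s: "\<alpha> * x + \<beta> * y = s" using be by (simp add: y_def)
  define S where "S = 1 + x + y"
  have S: "0 < S" using x y by (simp add: S_def)
  have D: "\<beta> * S = \<beta> + s + (\<beta> - \<alpha>) * x" using be by (simp add: S_def y_def field_simps)
  obtain u' v where uv: "H_II_plus \<alpha> \<beta> (x, y) = (u', v)" by fastforce
  have "u' = y * (\<beta> + s) / (\<alpha> * S)"
    using H_II_plus_factors(1)[OF al be _ uv] S s by (simp add: S_def)
  also have "\<dots> = (\<beta> + s) * (\<beta> * y) / (\<alpha> * (\<beta> * S))"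
    using be by simp
  also have "\<dots> = u"
    using be by (simp add: u_def H_II_line_map_def D[symmetric] y_def)
  finally have "u' = u" .
  moreover have "v = (s - \<alpha> * u') / \<beta>"
    using H_II_plus_preserves_line[OF al be _ uv] S s be by (simp add: S_def field_simps)
  ultimately show "H_II_plus \<alpha> \<beta> (x, y) = (u, (s - \<alpha> * u) / \<beta>)" using uv by simp
  have "(\<alpha> + s) * (\<beta> + s) / (\<alpha> * \<beta> * (1 + x + y)\<^sup>2) = \<beta> * (\<alpha> + s) * (\<beta> + s) / (\<alpha> * (\<beta> * S)\<^sup>2)"
    unfolding S_def[symmetric] using al be S by (simp add: field_simps power2_eq_square)
  then show "(\<alpha> + s) * (\<beta> + s) / (\<alpha> * \<beta> * (1 + x + y)\<^sup>2) = H_II_line_jacobian \<alpha> \<beta> s x"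
    by (simp add: H_II_line_jacobian_def D)
qed

lemma measurable_H_II_plus [measurable]:
  "H_II_plus \<alpha> \<beta> \<in> lborel \<Otimes>\<^sub>M lborel \<rightarrow>\<^sub>M lborel \<Otimes>\<^sub>M lborel"
  unfolding H_II_plus_def split_beta by measurable

lemma nn_integral_lborel_pair_along_lines:
  fixes G :: "real \<times> real \<Rightarrow> ennreal" and \<alpha> \<beta> :: real
  assumes [measurable]: "G \<in> borel_measurable (lborel \<Otimes>\<^sub>M lborel)" and "0 < \<beta>"
  shows "(\<integral>\<^sup>+z. G z \<partial>(lborel \<Otimes>\<^sub>M lborel))
       = ennreal (1 / \<beta>) * (\<integral>\<^sup>+s. \<integral>\<^sup>+x. G (x, (s - \<alpha> * x) / \<beta>) \<partial>lborel \<partial>lborel)"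
proof -
  have "(\<integral>\<^sup>+z. G z \<partial>(lborel \<Otimes>\<^sub>M lborel)) = (\<integral>\<^sup>+x. \<integral>\<^sup>+y. G (x, y) \<partial>lborel \<partial>lborel)"
    by (simp add: lborel.nn_integral_fst)
  also have "\<dots> = (\<integral>\<^sup>+x. ennreal (1 / \<beta>) * (\<integral>\<^sup>+s. G (x, (s - \<alpha> * x) / \<beta>) \<partial>lborel) \<partial>lborel)"
  proof (rule nn_integral_cong)
    fix x :: real
    have "(\<integral>\<^sup>+y. G (x, y) \<partial>lborel) = ennreal \<bar>1 / \<beta>\<bar> * (\<integral>\<^sup>+s. G (x, - \<alpha> * x / \<beta> + 1 / \<beta> * s) \<partial>lborel)"
      by (rule nn_integral_real_affine) (use \<open>0 < \<beta>\<close> in auto)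
    then show "(\<integral>\<^sup>+y. G (x, y) \<partial>lborel) = ennreal (1 / \<beta>) * (\<integral>\<^sup>+s. G (x, (s - \<alpha> * x) / \<beta>) \<partial>lborel)"
      using \<open>0 < \<beta>\<close> by (simp add: diff_divide_distrib)
  qed
  also have "\<dots> = ennreal (1 / \<beta>) * (\<integral>\<^sup>+x. \<integral>\<^sup>+s. G (x, (s - \<alpha> * x) / \<beta>) \<partial>lborel \<partial>lborel)"
    by (rule nn_integral_cmult) measurable
  also have "(\<integral>\<^sup>+x. \<integral>\<^sup>+s. G (x, (s - \<alpha> * x) / \<beta>) \<partial>lborel \<partial>lborel)
      = (\<integral>\<^sup>+s. \<integral>\<^sup>+x. G (x, (s - \<alpha> * x) / \<beta>) \<partial>lborel \<partial>lborel)"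
    by (rule lborel_pair.Fubini'[symmetric]) measurable
  finally show ?thesis .
qed

locale H_II_kummer =
  fixes \<alpha> \<beta> lam a b :: real
  assumes alpha_pos: "0 < \<alpha>" and beta_pos: "0 < \<beta>"
begin

abbreviation "fX \<equiv> kummer2_dens lam a b \<alpha> 1"
abbreviation "fY \<equiv> kummer2_dens (- lam) a b \<beta> 1"
abbreviation "fU \<equiv> kummer2_dens (- lam) a b \<alpha> 1"
abbreviation "fV \<equiv> kummer2_dens lam a b \<beta> 1"

lemma kummer2_dens_mult_on_line:
  assumes "0 < x" "x < s / \<alpha>"
  defines "u \<equiv> H_II_line_map \<alpha> \<beta> s x"
  shows "fX x * fY ((s - \<alpha> * x) / \<beta>)
       = (\<beta> / \<alpha>) powr lam * fU u * fV ((s - \<alpha> * u) / \<beta>) * H_II_line_jacobian \<alpha> \<beta> s x"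
proof -
  have y: "0 < (s - \<alpha> * x) / \<beta>" using assms alpha_pos beta_pos by (simp add: field_simps)
  have t: "\<alpha> * x + \<beta> * ((s - \<alpha> * x) / \<beta>) = s" using beta_pos by simp
  show ?thesis
    using kummer2_dens_mult_H_II_plus[OF \<open>0 < x\<close> y alpha_pos beta_pos
        H_II_plus_on_line(1)[OF alpha_pos beta_pos assms(1,2)], of lam a b]
    unfolding t H_II_plus_on_line(2)[OF alpha_pos beta_pos assms(1,2)] u_def .
qed

lemma H_II_plus_line_integrand_eq:
  assumes s: "0 < s"
  defines "m \<equiv> H_II_line_map \<alpha> \<beta> s"
  shows "h (H_II_plus \<alpha> \<beta> (x, (s - \<alpha> * x) / \<beta>)) * fX x * fY ((s - \<alpha> * x) / \<beta>)
       = (\<beta> / \<alpha>) powr lam * (h (m x, (s - \<alpha> * m x) / \<beta>) * fU (m x) * fV ((s - \<alpha> * m x) / \<beta>)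
           * H_II_line_jacobian \<alpha> \<beta> s x * indicator {0..s / \<alpha>} x)"
proof (cases "0 < x \<and> x < s / \<alpha>")
  case True
  then show ?thesis
    using kummer2_dens_mult_on_line[of x s] H_II_plus_on_line(1)[OF alpha_pos beta_pos, of x s]
    by (simp add: m_def)
next
  case False
  consider "x \<notin> {0..s / \<alpha>}" | "x = 0" | "x = s / \<alpha>" using False by fastforce
  then have "fU (m x) * fV ((s - \<alpha> * m x) / \<beta>) * indicator {0..s / \<alpha>} x = 0"
    by cases (use alpha_pos beta_pos s in \<open>simp_all add: m_def H_II_line_map_def kummer2_dens_eq_0\<close>)
  moreover have "fX x * fY ((s - \<alpha> * x) / \<beta>) = 0"
    using kummer2_dens_mult_line_eq_0[OF alpha_pos beta_pos False] .
  ultimately show ?thesis by auto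
qed

lemma nn_integral_H_II_plus_on_line:
  fixes h :: "real \<times> real \<Rightarrow> real"
  assumes [measurable]: "h \<in> borel_measurable borel" and h_nonneg: "\<And>z. 0 \<le> h z" and s: "0 < s"
  shows "(\<integral>\<^sup>+x. ennreal (h (H_II_plus \<alpha> \<beta> (x, (s - \<alpha> * x) / \<beta>)) * fX x * fY ((s - \<alpha> * x) / \<beta>)) \<partial>lborel)
     = ennreal ((\<beta> / \<alpha>) powr lam) * (\<integral>\<^sup>+u. ennreal (h (u, (s - \<alpha> * u) / \<beta>) * fU u * fV ((s - \<alpha> * u) / \<beta>)) \<partial>lborel)"
proof -
  define c where "c = (\<beta> / \<alpha>) powr lam"
  define m where "m = H_II_line_map \<alpha> \<beta> s"
  define G where "G = H_II_line_jacobian \<alpha> \<beta> s"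
  define Q where "Q u = h (u, (s - \<alpha> * u) / \<beta>) * fU u * fV ((s - \<alpha> * u) / \<beta>)" for u
  have [measurable]: "Q \<in> borel_measurable borel" "m \<in> borel_measurable borel" "G \<in> borel_measurable borel"
    unfolding Q_def m_def G_def H_II_line_map_def H_II_line_jacobian_def by measurable
  have Q_outside: "Q u = 0" if "\<not> (0 < u \<and> u < s / \<alpha>)" for u
    using kummer2_dens_mult_line_eq_0[OF alpha_pos beta_pos that] by (simp add: Q_def)
  have den: "0 < \<beta> + s + (\<beta> - \<alpha>) * x" if "x \<in> {0..s / \<alpha>}" for x
    using H_II_line_denominator_pos[OF alpha_pos beta_pos s that] .
  have m_ends: "m 0 = s / \<alpha>" "m (s / \<alpha>) = 0"
    using alpha_pos beta_pos s by (simp_all add: m_def H_II_line_map_def)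
  have pointwise: "h (H_II_plus \<alpha> \<beta> (x, (s - \<alpha> * x) / \<beta>)) * fX x * fY ((s - \<alpha> * x) / \<beta>)
      = c * (Q (m x) * G x * indicator {0..s / \<alpha>} x)" for x
    using H_II_plus_line_integrand_eq[OF s, of h x] by (simp add: c_def Q_def m_def G_def mult_ac)
  have "(\<integral>\<^sup>+x. ennreal (Q (- (- m x)) * G x * indicator {0..s / \<alpha>} x) \<partial>lborel)
      = (\<integral>\<^sup>+w. ennreal (Q (- w) * indicator {- m 0..- m (s / \<alpha>)} w) \<partial>lborel)"
  proof (rule nn_integral_substitution[symmetric])
    show "set_borel_measurable borel {- m 0..- m (s / \<alpha>)} (\<lambda>w. Q (- w))"
      unfolding set_borel_measurable_def by measurable
    show "((\<lambda>x. - m x) has_real_derivative G x) (at x)" if "x \<in> {0..s / \<alpha>}" for x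
      unfolding m_def G_def using has_real_derivative_H_II_line_map[OF alpha_pos] den[OF that] by simp
    show "continuous_on {0..s / \<alpha>} G"
      unfolding G_def H_II_line_jacobian_def using den alpha_pos
      by (intro continuous_intros) (fastforce simp: power2_eq_square)+
    show "0 \<le> G x" for x
      using alpha_pos beta_pos s by (simp add: G_def H_II_line_jacobian_def)
  qed (use alpha_pos s in simp)
  also have "\<dots> = (\<integral>\<^sup>+u. ennreal (Q u * indicator {0..s / \<alpha>} u) \<partial>lborel)"
    unfolding m_ends
    by (subst nn_integral_real_affine[where c = "-1" and t = 0])
       (auto intro!: nn_integral_cong simp: indicator_def)
  also have "\<dots> = (\<integral>\<^sup>+u. ennreal (Q u) \<partial>lborel)"
    using Q_outside by (intro nn_integral_cong) (auto simp: indicator_def)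
  finally have "(\<integral>\<^sup>+x. ennreal (Q (m x) * G x * indicator {0..s / \<alpha>} x) \<partial>lborel) = (\<integral>\<^sup>+u. ennreal (Q u) \<partial>lborel)"
    by simp
  moreover have "c \<ge> 0" by (simp add: c_def)
  ultimately show ?thesis
    unfolding pointwise ennreal_mult'[OF \<open>c \<ge> 0\<close>]
    by (subst nn_integral_cmult) (simp_all add: c_def Q_def)
qed

lemma nn_integral_H_II_plus:
  fixes h :: "real \<times> real \<Rightarrow> real"
  assumes [measurable]: "h \<in> borel_measurable (lborel \<Otimes>\<^sub>M lborel)" and h_nonneg: "\<And>z. 0 \<le> h z"
  shows "(\<integral>\<^sup>+z. ennreal (h (H_II_plus \<alpha> \<beta> z) * fX (fst z) * fY (snd z)) \<partial>(lborel \<Otimes>\<^sub>M lborel))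
     = ennreal ((\<beta> / \<alpha>) powr lam) * (\<integral>\<^sup>+z. ennreal (h z * fU (fst z) * fV (snd z)) \<partial>(lborel \<Otimes>\<^sub>M lborel))"
proof -
  define c where "c = (\<beta> / \<alpha>) powr lam"
  have h_borel [measurable]: "h \<in> borel_measurable borel" using assms(1) by (simp add: lborel_prod)
  have fibre: "(\<integral>\<^sup>+x. ennreal (h (H_II_plus \<alpha> \<beta> (x, (s - \<alpha> * x) / \<beta>)) * fX x * fY ((s - \<alpha> * x) / \<beta>)) \<partial>lborel)
     = ennreal c * (\<integral>\<^sup>+u. ennreal (h (u, (s - \<alpha> * u) / \<beta>) * fU u * fV ((s - \<alpha> * u) / \<beta>)) \<partial>lborel)" for s
  proof (cases "0 < s")
    case True
    show ?thesis unfolding c_def by (rule nn_integral_H_II_plus_on_line[OF h_borel h_nonneg True])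
  next
    case False
    then have "s / \<alpha> \<le> 0" using alpha_pos by (simp add: divide_nonpos_pos)
    then have "\<not> (0 < x \<and> x < s / \<alpha>)" for x by linarith
    note zero = kummer2_dens_mult_line_eq_0[OF alpha_pos beta_pos this]
    show ?thesis by (simp add: mult.assoc zero)
  qed
  have "(\<integral>\<^sup>+z. ennreal (h (H_II_plus \<alpha> \<beta> z) * fX (fst z) * fY (snd z)) \<partial>(lborel \<Otimes>\<^sub>M lborel))
      = ennreal (1 / \<beta>) * (\<integral>\<^sup>+s. ennreal c *
          (\<integral>\<^sup>+u. ennreal (h (u, (s - \<alpha> * u) / \<beta>) * fU u * fV ((s - \<alpha> * u) / \<beta>)) \<partial>lborel) \<partial>lborel)"
    by (subst nn_integral_lborel_pair_along_lines[OF _ beta_pos, where \<alpha> = \<alpha>]) (simp_all add: fibre)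
  also have "\<dots> = ennreal c * (ennreal (1 / \<beta>) *
      (\<integral>\<^sup>+s. \<integral>\<^sup>+u. ennreal (h (u, (s - \<alpha> * u) / \<beta>) * fU u * fV ((s - \<alpha> * u) / \<beta>)) \<partial>lborel \<partial>lborel))"
    by (subst nn_integral_cmult) (simp_all add: ac_simps)
  also have "\<dots> = ennreal c * (\<integral>\<^sup>+z. ennreal (h z * fU (fst z) * fV (snd z)) \<partial>(lborel \<Otimes>\<^sub>M lborel))"
    by (subst nn_integral_lborel_pair_along_lines[OF _ beta_pos, where \<alpha> = \<alpha>]) simp_all
  finally show ?thesis unfolding c_def .
qed

lemma distr_density_H_II_plus:
  assumes "0 \<le> r"
  shows "distr (density (lborel \<Otimes>\<^sub>M lborel) (\<lambda>z. ennreal (r * fX (fst z) * fY (snd z))))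
           (lborel \<Otimes>\<^sub>M lborel) (H_II_plus \<alpha> \<beta>)
       = density (lborel \<Otimes>\<^sub>M lborel) (\<lambda>z. ennreal (r * (\<beta> / \<alpha>) powr lam * fU (fst z) * fV (snd z)))"
proof (rule measure_eqI)
  fix A assume "A \<in> sets (distr (density (lborel \<Otimes>\<^sub>M lborel) (\<lambda>z. ennreal (r * fX (fst z) * fY (snd z))))
           (lborel \<Otimes>\<^sub>M lborel) (H_II_plus \<alpha> \<beta>))"
  then have A [measurable]: "A \<in> sets (lborel \<Otimes>\<^sub>M lborel)" by simp
  have A': "A \<in> sets (borel \<Otimes>\<^sub>M borel)" using A by simp
  have "emeasure (distr (density (lborel \<Otimes>\<^sub>M lborel) (\<lambda>z. ennreal (r * fX (fst z) * fY (snd z))))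
           (lborel \<Otimes>\<^sub>M lborel) (H_II_plus \<alpha> \<beta>)) A
      = (\<integral>\<^sup>+z. ennreal (r * indicator A (H_II_plus \<alpha> \<beta> z) * fX (fst z) * fY (snd z)) \<partial>(lborel \<Otimes>\<^sub>M lborel))"
    by (subst nn_integral_indicator[symmetric], simp add: A',
        subst nn_integral_distr, simp_all add: A' nn_integral_density)
       (auto intro!: nn_integral_cong split: split_indicator)
  also have "\<dots> = ennreal ((\<beta> / \<alpha>) powr lam) *
      (\<integral>\<^sup>+z. ennreal (r * indicator A z * fU (fst z) * fV (snd z)) \<partial>(lborel \<Otimes>\<^sub>M lborel))"
    using nn_integral_H_II_plus[of "\<lambda>z. r * indicator A z"] assms by simp
  also have "\<dots> = (\<integral>\<^sup>+z. ennreal (r * (\<beta> / \<alpha>) powr lam * fU (fst z) * fV (snd z)) * indicator A z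
      \<partial>(lborel \<Otimes>\<^sub>M lborel))"
    by (subst nn_integral_cmult[symmetric])
       (auto intro!: nn_integral_cong simp: ennreal_mult'[symmetric] ac_simps split: split_indicator)
  also have "\<dots> = emeasure (density (lborel \<Otimes>\<^sub>M lborel)
      (\<lambda>z. ennreal (r * (\<beta> / \<alpha>) powr lam * fU (fst z) * fV (snd z)))) A"
    by (rule emeasure_density[symmetric]) (simp_all add: A')
  finally show "emeasure (distr (density (lborel \<Otimes>\<^sub>M lborel) (\<lambda>z. ennreal (r * fX (fst z) * fY (snd z))))
           (lborel \<Otimes>\<^sub>M lborel) (H_II_plus \<alpha> \<beta>)) A
      = emeasure (density (lborel \<Otimes>\<^sub>M lborel)
      (\<lambda>z. ennreal (r * (\<beta> / \<alpha>) powr lam * fU (fst z) * fV (snd z)))) A" .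
qed simp

end

theorem theorem1p1:
  fixes M :: "'s measure" and X Y :: "'s \<Rightarrow> real"
    and \<alpha> \<beta> lam a b :: real
  assumes "prob_space M"
    and "\<alpha> > 0" and "\<beta> > 0" and "a > 0" and "b > 0"
    and "- b < lam / 2" and "lam / 2 < b"
    and "X \<in> borel_measurable M" and "Y \<in> borel_measurable M"
    and "prob_space.indep_var M borel X borel Y"
    and "distr M lborel X = kummer2 lam a b \<alpha> 1"
    and "distr M lborel Y = kummer2 (- lam) a b \<beta> 1"
  shows "prob_space.indep_var M borel (\<lambda>\<omega>. fst (H_II_plus \<alpha> \<beta> (X \<omega>, Y \<omega>)))
                                 borel (\<lambda>\<omega>. snd (H_II_plus \<alpha> \<beta> (X \<omega>, Y \<omega>)))
       \<and> distr M lborel (\<lambda>\<omega>. fst (H_II_plus \<alpha> \<beta> (X \<omega>, Y \<omega>))) = kummer2 (- lam) a b \<alpha> 1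
       \<and> distr M lborel (\<lambda>\<omega>. snd (H_II_plus \<alpha> \<beta> (X \<omega>, Y \<omega>))) = kummer2 lam a b \<beta> 1"
proof -
  interpret P: prob_space M by fact
  interpret H_II_kummer \<alpha> \<beta> lam a b by unfold_locales (use assms in auto)
  have [measurable]: "X \<in> borel_measurable M" "Y \<in> borel_measurable M" by fact+
  define r where "r = 1 / ((\<integral>t. fX t \<partial>lborel) * (\<integral>t. fY t \<partial>lborel))"
  have "0 \<le> r" by (simp add: r_def integral_nonneg_AE kummer2_dens_nonneg)
  have joint: "distr M (lborel \<Otimes>\<^sub>M lborel) (\<lambda>\<omega>. (X \<omega>, Y \<omega>))
      = density (lborel \<Otimes>\<^sub>M lborel) (\<lambda>z. ennreal (r * fX (fst z) * fY (snd z)))"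
    using P.distr_pair_eq_pair_measure_if_indep_var[OF assms(10)] assms(11,12)
    by (simp add: kummer2_eq_normalized_density normalized_density_pair kummer2_dens_nonneg r_def)
  have law: "distr M (lborel \<Otimes>\<^sub>M lborel) (\<lambda>\<omega>. H_II_plus \<alpha> \<beta> (X \<omega>, Y \<omega>))
      = density (lborel \<Otimes>\<^sub>M lborel) (\<lambda>z. ennreal (r * (\<beta> / \<alpha>) powr lam * fU (fst z) * fV (snd z)))"
  proof -
    have "distr M (lborel \<Otimes>\<^sub>M lborel) (\<lambda>\<omega>. H_II_plus \<alpha> \<beta> (X \<omega>, Y \<omega>))
        = distr (distr M (lborel \<Otimes>\<^sub>M lborel) (\<lambda>\<omega>. (X \<omega>, Y \<omega>))) (lborel \<Otimes>\<^sub>M lborel) (H_II_plus \<alpha> \<beta>)"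
      by (subst distr_distr) (simp_all add: comp_def)
    then show ?thesis by (simp only: joint distr_density_H_II_plus[OF \<open>0 \<le> r\<close>])
  qed
  have "prob_space (density (lborel \<Otimes>\<^sub>M lborel) (\<lambda>z. ennreal (r * (\<beta> / \<alpha>) powr lam * fU (fst z) * fV (snd z))))"
    using P.prob_space_distr[of "\<lambda>\<omega>. H_II_plus \<alpha> \<beta> (X \<omega>, Y \<omega>)" "lborel \<Otimes>\<^sub>M lborel"] law by simp
  moreover have "0 \<le> r * (\<beta> / \<alpha>) powr lam" using \<open>0 \<le> r\<close> by simp
  ultimately have UV: "prob_space (normalized_density fU)" "prob_space (normalized_density fV)"
    "distr M (lborel \<Otimes>\<^sub>M lborel) (\<lambda>\<omega>. H_II_plus \<alpha> \<beta> (X \<omega>, Y \<omega>))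
       = normalized_density fU \<Otimes>\<^sub>M normalized_density fV"
    using normalized_density_pair_if_prob_space[of fU fV] law by (simp_all add: kummer2_dens_nonneg)
  show ?thesis
    using P.indep_var_if_distr_eq_pair_measure[OF _ UV(1) _ UV(2) _ UV(3)] by (simp add: kummer2_eq_normalized_density)
qed

end
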